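(* Let $z_1,\dots,z_n\in\mathbb C$ be pairwise distinct and $\mu_1,\dots,\mu_n$ variables; set $f_a(x)=(x+\mu_a)e^{z_ax}$ and $h_a=-\mu_a-\sum_{b\ne a}\frac1{z_a-z_b}$, $a=1,\dots,n$. Let $$W(u,x)=e^{-ux-\sum_{a=1}^nz_ax}\,\mathrm{Wr}[f_1(x),\dots,f_n(x),e^{ux}],\qquad W_0(x)=e^{-\sum_{a=1}^nz_ax}\,\mathrm{Wr}[f_1(x),\dots,f_n(x)].$$ Then $$W(u,x)=\Delta\cdot\det\bigl((u-Z)(x-Q)-1\bigr),\qquad W_0(x)=\Delta\cdot\det(x-Q).$$
   Context: For functions $g_1,\dots,g_m$ of $x$, $\mathrm{Wr}[g_1,\dots,g_m]=\det\bigl(g_k^{(l-1)}\bigr)_{k,l=1}^m$ is the Wronskian (derivatives in $x$). $\Delta=\prod_{1\le a<b\le n}(z_b-z_a)$. $Z=\mathrm{diag}(z_1,\dots,z_n)$, and $Q$ is the $n\times n$ matrix with $Q_{aa}=h_a$ and $Q_{ab}=1/(z_b-z_a)$ for $a\ne b$. *)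

theory Defs
  imports Complex_Main "HOL-Analysis.Derivative" "Jordan_Normal_Form.Determinant"
begin

definition wronskian :: "(complex \<Rightarrow> complex) list \<Rightarrow> complex \<Rightarrow> complex" where
  "wronskian gs x = det (mat (length gs) (length gs) (\<lambda>(k, l). (deriv ^^ l) (gs ! k) x))"

definition Delta :: "nat \<Rightarrow> (nat \<Rightarrow> complex) \<Rightarrow> complex" where
  "Delta n z = (\<Prod>b<n. \<Prod>a<b. (z b - z a))"

definition hh :: "nat \<Rightarrow> (nat \<Rightarrow> complex) \<Rightarrow> (nat \<Rightarrow> complex) \<Rightarrow> nat \<Rightarrow> complex" where
  "hh n z \<mu> a = - \<mu> a - (\<Sum>b\<in>{..<n} - {a}. 1 / (z a - z b))"

definition Zmat :: "nat \<Rightarrow> (nat \<Rightarrow> complex) \<Rightarrow> complex mat" where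
  "Zmat n z = mat n n (\<lambda>(a, b). if a = b then z a else 0)"

definition Qmat :: "nat \<Rightarrow> (nat \<Rightarrow> complex) \<Rightarrow> (nat \<Rightarrow> complex) \<Rightarrow> complex mat" where
  "Qmat n z \<mu> = mat n n (\<lambda>(a, b). if a = b then hh n z \<mu> a else 1 / (z b - z a))"

definition fa :: "(nat \<Rightarrow> complex) \<Rightarrow> (nat \<Rightarrow> complex) \<Rightarrow> nat \<Rightarrow> complex \<Rightarrow> complex" where
  "fa z \<mu> a x = (x + \<mu> a) * exp (z a * x)"

end

theory Submission
  imports Defs "HOL-Computational_Algebra.Polynomial"
begin

text \<open>
  Factoring \<open>e^(z_a x)\<close> out of the row of \<open>f_a\<close>, the Wronskian matrix of \<open>f_1, ..., f_n\<close> has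
  entries \<open>(x + \<mu>_a) z_a^l + l z_a^(l-1)\<close>: the values at the node \<open>z_a\<close> of \<open>(x + \<mu>_a) t^l + (t^l)'\<close>.
  On polynomials of degree \<open>< n\<close>, differentiation acts on the values at the distinct nodes through
  the matrix \<open>B_ab = L_b'(z_a)\<close> of derivatives of the Lagrange basis, so the Wronskian matrix
  becomes \<open>(Y + B) V\<close> with \<open>Y = diag(x + \<mu>_a)\<close> and \<open>V\<close> the Vandermonde matrix, \<open>det V = \<Delta>\<close>.
  Conjugating \<open>B\<close> by \<open>diag(\<Prod>_(c \<noteq> a) (z_a - z_c))\<close> gives the matrix with entries \<open>1/(z_a - z_b)\<close>
  off and \<open>\<Sum>_(c \<noteq> a) 1/(z_a - z_c)\<close> on the diagonal, and \<open>Y\<close> plus that matrix is \<open>x - Q\<close>.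
  With the extra function \<open>e^(ux)\<close>, the column operations replacing column \<open>l + 1\<close> by \<open>u\<close> times
  column \<open>l\<close> minus column \<open>l + 1\<close> clear the last row and turn the remaining rows into those
  of \<open>((u - Z)(Y + B) - 1) V\<close>.
\<close>

lemma det_mat_diag: "det (mat_diag n f) = (\<Prod>i<n. f i)"
  by (subst det_upper_triangular[of _ n])
    (auto simp: mat_diag_def prod_list_diag_prod atLeast0LessThan)

lemma det_similar:
  fixes A A' P :: "'a::idom mat"
  assumes "A \<in> carrier_mat n n" "A' \<in> carrier_mat n n" "P \<in> carrier_mat n n"
    and "A * P = P * A'" and "det P \<noteq> 0"
  shows "det A = det A'"
  using assms det_mult[of A n P] det_mult[of P n A'] by (simp add: mult.commute)

lemma det_scale_rows:
  "det (mat n n (\<lambda>(a, l). e a * M a l)) = (\<Prod>a<n. e a) * det (mat n n (\<lambda>(a, l). M a l))"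
proof -
  have "mat n n (\<lambda>(a, l). e a * M a l) = mat_diag n e * mat n n (\<lambda>(a, l). M a l)"
    by (subst mat_diag_mult_left) auto
  then show ?thesis by (simp add: det_mult[of _ n] det_mat_diag)
qed

lemma det_last_row_powers:
  fixes M :: "'a::comm_ring_1 mat"
  assumes M: "M \<in> carrier_mat (Suc n) (Suc n)"
    and last: "\<And>l. l < Suc n \<Longrightarrow> M $$ (n, l) = u ^ l"
  shows "det M = det (mat n n (\<lambda>(a, k). u * M $$ (a, k) - M $$ (a, Suc k)))"
proof -
  \<comment> \<open>Right multiplication by E replaces column k+1 by u times column k minus column k+1,
    which clears the last row except for its first entry.\<close>
  define E :: "'a mat" where
    "E = mat (Suc n) (Suc n)
       (\<lambda>(i, j). if i = j then (if i = 0 then 1 else -1) else if Suc i = j then u else 0)"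
  have E: "E \<in> carrier_mat (Suc n) (Suc n)" by (simp add: E_def)
  have "det E = (\<Prod>i<Suc n. E $$ (i, i))"
    by (subst det_upper_triangular[OF _ E])
      (auto simp: E_def prod_list_diag_prod atLeast0LessThan)
  also have "\<dots> = (-1) ^ n" by (simp only: prod.lessThan_Suc_shift) (simp add: E_def)
  finally have det_E: "det E = (-1) ^ n" .
  have ME: "(M * E) $$ (a, j) = (if j = 0 then M $$ (a, 0) else u * M $$ (a, j - 1) - M $$ (a, j))"
    if "a < Suc n" "j < Suc n" for a j
  proof -
    have "(M * E) $$ (a, j) = (\<Sum>l<Suc n. M $$ (a, l) * E $$ (l, j))"
      using that M E by (simp add: scalar_prod_def atLeast0LessThan)
    also have "\<dots> = (\<Sum>l<Suc n. (if l = j then (if j = 0 then 1 else -1) * M $$ (a, l) else 0)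
        + (if Suc l = j then u * M $$ (a, l) else 0))"
      using that by (intro sum.cong) (auto simp: E_def)
    also have "\<dots> = (if j = 0 then M $$ (a, 0) else u * M $$ (a, j - 1) - M $$ (a, j))"
      using that by (cases j) (auto simp: sum.distrib)
    finally show ?thesis .
  qed
  have "det M * (-1) ^ n = det (M * E)" using det_mult[OF M E] det_E by simp
  also have "\<dots> = (\<Sum>j<Suc n. (M * E) $$ (n, j) * cofactor (M * E) n j)"
    using M E by (intro laplace_expansion_row) auto
  also have "\<dots> = cofactor (M * E) n 0"
    by (simp only: sum.lessThan_Suc_shift) (simp add: ME last)
  also have "\<dots> = (-1) ^ n * det (mat_delete (M * E) n 0)"
    by (simp add: cofactor_def)
  also have "mat_delete (M * E) n 0 = mat n n (\<lambda>(a, k). u * M $$ (a, k) - M $$ (a, Suc k))"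
    using M E by (auto simp: mat_delete_def ME intro!: eq_matI)
  finally have "det M * (-1) ^ n * (-1) ^ n
      = det (mat n n (\<lambda>(a, k). u * M $$ (a, k) - M $$ (a, Suc k))) * ((-1) ^ n * (-1) ^ n)"
    by (simp add: ac_simps)
  then show ?thesis by (simp add: mult.assoc flip: power_mult_distrib)
qed

definition vandermonde_mat :: "nat \<Rightarrow> (nat \<Rightarrow> 'a::comm_ring_1) \<Rightarrow> 'a mat" where
  "vandermonde_mat n z = mat n n (\<lambda>(a, l). z a ^ l)"

lemma vandermonde_mat_carrier [simp]: "vandermonde_mat n z \<in> carrier_mat n n"
  by (simp add: vandermonde_mat_def)

lemma det_vandermonde_mat: "det (vandermonde_mat n z) = Delta n z"
proof (induction n)
  case 0
  show ?case by (simp add: Delta_def det_def vandermonde_mat_def)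
next
  case (Suc n)
  have "det (vandermonde_mat (Suc n) z)
      = det (mat n n (\<lambda>(a, k). (z n - z a) * z a ^ k))"
    by (subst det_last_row_powers[of _ _ "z n"])
      (auto simp: vandermonde_mat_def algebra_simps intro!: arg_cong[where f = det])
  also have "\<dots> = (\<Prod>a<n. z n - z a) * Delta n z"
    using det_scale_rows[of n "\<lambda>a. z n - z a" "\<lambda>a k. z a ^ k"] Suc.IH
    by (simp add: vandermonde_mat_def)
  also have "\<dots> = Delta (Suc n) z" by (simp add: Delta_def)
  finally show ?case .
qed

lemma poly_pderiv_prod_linear:
  fixes z :: "nat \<Rightarrow> 'a::field"
  assumes "finite S"
  shows "poly (pderiv (\<Prod>c\<in>S. [:- z c, 1:])) t = (\<Sum>d\<in>S. \<Prod>c\<in>S - {d}. t - z c)"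
  using assms by (simp add: pderiv_prod poly_sum poly_prod pderiv_pCons)

lemma poly_pderiv_prod_linear_at_root:
  fixes z :: "nat \<Rightarrow> 'a::field"
  assumes "finite S" "a \<in> S"
  shows "poly (pderiv (\<Prod>c\<in>S. [:- z c, 1:])) (z a) = (\<Prod>c\<in>S - {a}. z a - z c)"
proof -
  have "(\<Sum>d\<in>S - {a}. \<Prod>c\<in>S - {d}. z a - z c) = 0"
    using assms by (intro sum.neutral ballI prod_zero) auto
  then show ?thesis
    using assms by (simp add: poly_pderiv_prod_linear sum.remove[of S a])
qed

lemma poly_pderiv_prod_linear_off_roots:
  fixes z :: "nat \<Rightarrow> 'a::field"
  assumes "finite S" "\<And>c. c \<in> S \<Longrightarrow> t \<noteq> z c"
  shows "poly (pderiv (\<Prod>c\<in>S. [:- z c, 1:])) t = (\<Prod>c\<in>S. t - z c) * (\<Sum>d\<in>S. 1 / (t - z d))"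
proof -
  have "(\<Prod>c\<in>S - {d}. t - z c) = (\<Prod>c\<in>S. t - z c) * (1 / (t - z d))" if "d \<in> S" for d
    using assms that by (simp add: prod.remove[of S d])
  then show ?thesis
    using assms by (simp add: poly_pderiv_prod_linear sum_distrib_left)
qed

definition node_prod :: "nat \<Rightarrow> (nat \<Rightarrow> 'a::field) \<Rightarrow> nat \<Rightarrow> 'a" where
  "node_prod n z a = (\<Prod>c\<in>{..<n} - {a}. z a - z c)"

definition lagrange_basis :: "nat \<Rightarrow> (nat \<Rightarrow> 'a::field) \<Rightarrow> nat \<Rightarrow> 'a poly" where
  "lagrange_basis n z b = smult (1 / node_prod n z b) (\<Prod>c\<in>{..<n} - {b}. [:- z c, 1:])"

lemma node_prod_nonzero:
  assumes "inj_on z {..<n}" "a < n"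
  shows "node_prod n z a \<noteq> 0"
  using assms by (auto simp: node_prod_def dest: inj_onD)

lemma poly_lagrange_basis:
  assumes "inj_on z {..<n}" "a < n" "b < n"
  shows "poly (lagrange_basis n z b) (z a) = (if a = b then 1 else 0)"
proof -
  have "(\<Prod>c\<in>{..<n} - {b}. z a - z c) = 0" if "a \<noteq> b"
    using assms that by (intro prod_zero) auto
  then show ?thesis
    using node_prod_nonzero[OF assms(1,3)]
    by (auto simp: lagrange_basis_def poly_prod node_prod_def)
qed

lemma degree_lagrange_basis:
  assumes "b < n"
  shows "degree (lagrange_basis n z b) < n"
proof -
  have "degree (lagrange_basis n z b) \<le> degree (\<Prod>c\<in>{..<n} - {b}. [:- z c, 1:])"
    unfolding lagrange_basis_def by (rule degree_smult_le)
  also have "\<dots> \<le> (\<Sum>c\<in>{..<n} - {b}. degree [:- z c, 1:])"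
    using degree_prod_sum_le[of "{..<n} - {b}" "\<lambda>c. [:- z c, 1:]"] by (simp add: o_def)
  also have "\<dots> < n" using assms by simp
  finally show ?thesis .
qed

lemma lagrange_interpolation:
  assumes inj: "inj_on z {..<n}" and deg: "degree p < n"
  shows "p = (\<Sum>b<n. smult (poly p (z b)) (lagrange_basis n z b))"
proof (rule poly_eqI_degree[where A = "z ` {..<n}"])
  fix t assume "t \<in> z ` {..<n}"
  then obtain a where a: "a < n" and t: "t = z a" by auto
  have "poly (\<Sum>b<n. smult (poly p (z b)) (lagrange_basis n z b)) t
      = (\<Sum>b<n. if b = a then poly p (z a) else 0)"
    unfolding poly_sum poly_smult t by (intro sum.cong) (auto simp: poly_lagrange_basis[OF inj a])
  then show "poly p t = poly (\<Sum>b<n. smult (poly p (z b)) (lagrange_basis n z b)) t"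
    using a t by simp
next
  have card: "card (z ` {..<n}) = n" using card_image[OF inj] by simp
  then show "degree p < card (z ` {..<n})" using deg by simp
  have "degree (\<Sum>b<n. smult (poly p (z b)) (lagrange_basis n z b)) < n"
    using deg
    by (intro degree_sum_less) (auto intro: le_less_trans[OF degree_smult_le] degree_lagrange_basis)
  then show "degree (\<Sum>b<n. smult (poly p (z b)) (lagrange_basis n z b)) < card (z ` {..<n})"
    using card by simp
qed

definition diff_mat :: "nat \<Rightarrow> (nat \<Rightarrow> 'a::field) \<Rightarrow> 'a mat" where
  "diff_mat n z = mat n n (\<lambda>(a, b). poly (pderiv (lagrange_basis n z b)) (z a))"

definition cauchy_mat :: "nat \<Rightarrow> (nat \<Rightarrow> 'a::field) \<Rightarrow> 'a mat" where
  "cauchy_mat n z = mat n n (\<lambda>(a, b).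
     if a = b then (\<Sum>c\<in>{..<n} - {a}. 1 / (z a - z c)) else 1 / (z a - z b))"

lemma diff_mat_carrier [simp]: "diff_mat n z \<in> carrier_mat n n"
  by (simp add: diff_mat_def)

lemma cauchy_mat_carrier [simp]: "cauchy_mat n z \<in> carrier_mat n n"
  by (simp add: cauchy_mat_def)

lemma diff_mat_mult_vandermonde_mat:
  assumes inj: "inj_on z {..<n}"
  shows "diff_mat n z * vandermonde_mat n z = mat n n (\<lambda>(a, l). of_nat l * z a ^ (l - 1))"
    (is "_ = ?D")
proof (rule eq_matI)
  fix a l assume "a < dim_row ?D" "l < dim_col ?D"
  then have a: "a < n" and l: "l < n" by auto
  have "monom 1 l = (\<Sum>b<n. smult (z b ^ l) (lagrange_basis n z b))"
    using lagrange_interpolation[OF inj, of "monom 1 l"] l by (simp add: degree_monom_eq poly_monom)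
  then have "poly (pderiv (monom 1 l)) (z a)
      = (\<Sum>b<n. poly (pderiv (lagrange_basis n z b)) (z a) * z b ^ l)"
    by (simp add: higher_pderiv_sum[of 1, simplified] pderiv_smult poly_sum mult.commute)
  then show "(diff_mat n z * vandermonde_mat n z) $$ (a, l) = ?D $$ (a, l)"
    using a l by (simp add: diff_mat_def vandermonde_mat_def scalar_prod_def atLeast0LessThan
        pderiv_monom poly_monom)
qed (auto simp: diff_mat_def vandermonde_mat_def)

lemma diff_mat_mult_node_prod:
  assumes inj: "inj_on z {..<n}"
  shows "diff_mat n z * mat_diag n (node_prod n z) = mat_diag n (node_prod n z) * cauchy_mat n z"
proof -
  have entry: "diff_mat n z $$ (a, b) * node_prod n z b = node_prod n z a * cauchy_mat n z $$ (a, b)"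
    if a: "a < n" and b: "b < n" for a b
  proof -
    have z_ne: "z a \<noteq> z c" if "c < n" "c \<noteq> a" for c
      using inj that a by (auto dest: inj_onD)
    have "diff_mat n z $$ (a, b) * node_prod n z b
        = poly (pderiv (\<Prod>c\<in>{..<n} - {b}. [:- z c, 1:])) (z a)"
      using a b node_prod_nonzero[OF inj b] by (simp add: diff_mat_def lagrange_basis_def pderiv_smult)
    also have "\<dots> = node_prod n z a * cauchy_mat n z $$ (a, b)"
    proof (cases "a = b")
      case True
      then show ?thesis
        by (subst poly_pderiv_prod_linear_off_roots)
          (use a z_ne in \<open>auto simp: node_prod_def cauchy_mat_def\<close>)
    next
      case False
      have "node_prod n z a = (z a - z b) * (\<Prod>c\<in>{..<n} - {b} - {a}. z a - z c)"
        using b False unfolding node_prod_def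
        by (subst prod.remove[of _ b]) (auto simp: Diff_insert2[symmetric] insert_commute)
      then show ?thesis
        using a b False z_ne[of b] by (simp add: poly_pderiv_prod_linear_at_root cauchy_mat_def)
    qed
    finally show ?thesis .
  qed
  show ?thesis
    by (auto simp: mat_diag_mult_left[of _ n n] mat_diag_mult_right[of _ n n] entry intro!: eq_matI)
qed

lemma index_diag_affine:
  assumes "K \<in> carrier_mat n n" "a < n" "b < n"
  shows "(mat_diag n w * (mat_diag n y + K) + mat_diag n s) $$ (a, b)
       = w a * ((if a = b then y a else 0) + K $$ (a, b)) + (if a = b then s a else 0)"
  using assms by (simp add: mat_diag_mult_left[of _ n n]) (simp add: mat_diag_def)

lemma det_diag_affine_similar:
  fixes K K' :: "'a::idom mat"
  assumes K: "K \<in> carrier_mat n n" and K': "K' \<in> carrier_mat n n"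
    and conj: "K * mat_diag n d = mat_diag n d * K'" and d: "\<And>a. a < n \<Longrightarrow> d a \<noteq> 0"
  shows "det (mat_diag n w * (mat_diag n y + K) + mat_diag n s)
       = det (mat_diag n w * (mat_diag n y + K') + mat_diag n s)"
proof (rule det_similar[where n = n])
  let ?G = "\<lambda>K. mat_diag n w * (mat_diag n y + K) + mat_diag n s"
  have entry: "?G K $$ (a, b) * d b = d a * ?G K' $$ (a, b)" if "a < n" "b < n" for a b
  proof -
    have K_entry: "K $$ (a, b) * d b = d a * K' $$ (a, b)"
      using arg_cong[OF conj, of "\<lambda>M. M $$ (a, b)"] that K K'
      by (simp add: mat_diag_mult_left[of _ n n] mat_diag_mult_right[of _ n n])
    have "?G K $$ (a, b) * d b - d a * ?G K' $$ (a, b) = w a * (K $$ (a, b) * d b - d a * K' $$ (a, b))"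
      using that K K' by (cases "a = b") (simp_all add: index_diag_affine algebra_simps)
    then show ?thesis using K_entry by simp
  qed
  show "?G K * mat_diag n d = mat_diag n d * ?G K'"
    using K K' entry
    by (subst mat_diag_mult_right[of _ n], simp, subst mat_diag_mult_left[of _ n n], simp)
      (auto intro!: eq_matI)
  show "det (mat_diag n d) \<noteq> 0" using d by (simp add: det_mat_diag)
qed (use K K' in auto)

lemma det_vandermonde_derivative_rows:
  fixes z :: "nat \<Rightarrow> complex"
  assumes inj: "inj_on z {..<n}"
  shows "det (mat n n (\<lambda>(a, l). w a * (y a * z a ^ l + of_nat l * z a ^ (l - 1)) + s a * z a ^ l))
       = Delta n z * det (mat_diag n w * (mat_diag n y + cauchy_mat n z) + mat_diag n s)"
proof -
  let ?G = "\<lambda>K. mat_diag n w * (mat_diag n y + K) + mat_diag n s"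
  let ?V = "vandermonde_mat n z"
  have YB: "mat_diag n y + diff_mat n z \<in> carrier_mat n n" by simp
  have WYB: "mat_diag n w * (mat_diag n y + diff_mat n z) \<in> carrier_mat n n"
    using mult_carrier_mat[OF mat_diag_dim YB] .
  have "?G (diff_mat n z) * ?V = mat_diag n w * (mat_diag n y + diff_mat n z) * ?V + mat_diag n s * ?V"
    using WYB by (intro add_mult_distrib_mat[of _ n n _ _ n]) auto
  also have "mat_diag n w * (mat_diag n y + diff_mat n z) * ?V
      = mat_diag n w * ((mat_diag n y + diff_mat n z) * ?V)"
    using YB by (intro assoc_mult_mat[of _ n n _ n _ n]) auto
  also have "(mat_diag n y + diff_mat n z) * ?V = mat_diag n y * ?V + diff_mat n z * ?V"
    by (intro add_mult_distrib_mat[of _ n n _ _ n]) auto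
  also have "mat_diag n w * (mat_diag n y * ?V + diff_mat n z * ?V) + mat_diag n s * ?V
      = mat n n (\<lambda>(a, l). w a * (y a * z a ^ l + of_nat l * z a ^ (l - 1)) + s a * z a ^ l)"
    by (simp add: diff_mat_mult_vandermonde_mat[OF inj] mat_diag_mult_left[of _ n n])
      (auto simp: vandermonde_mat_def intro!: eq_matI)
  finally have G_V: "?G (diff_mat n z) * ?V
      = mat n n (\<lambda>(a, l). w a * (y a * z a ^ l + of_nat l * z a ^ (l - 1)) + s a * z a ^ l)" .
  have "det (mat n n (\<lambda>(a, l). w a * (y a * z a ^ l + of_nat l * z a ^ (l - 1)) + s a * z a ^ l))
      = det (?G (diff_mat n z)) * Delta n z"
    unfolding G_V[symmetric] det_vandermonde_mat[symmetric]
    by (rule det_mult[where n = n]) (use WYB in auto)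
  also have "det (?G (diff_mat n z)) = det (?G (cauchy_mat n z))"
    using diff_mat_mult_node_prod[OF inj] node_prod_nonzero[OF inj]
    by (intro det_diag_affine_similar) auto
  finally show ?thesis by (simp add: mult.commute)
qed

lemma higher_deriv_fa:
  "(deriv ^^ l) (fa z \<mu> a) = (\<lambda>t. exp (z a * t) * ((t + \<mu> a) * z a ^ l + of_nat l * z a ^ (l - 1)))"
proof (induction l)
  case 0
  show ?case by (simp add: fa_def fun_eq_iff mult.commute)
next
  case (Suc l)
  have "((\<lambda>t. exp (z a * t) * ((t + \<mu> a) * z a ^ l + of_nat l * z a ^ (l - 1))) has_field_derivative
      exp (z a * t) * ((t + \<mu> a) * z a ^ Suc l + of_nat (Suc l) * z a ^ (Suc l - 1))) (at t)" for t
  proof -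
    have "z a * (of_nat l * z a ^ (l - 1)) = of_nat l * z a ^ l"
      by (cases l) auto
    then show ?thesis
      by (auto intro!: derivative_eq_intros simp: algebra_simps)
  qed
  then show ?case
    by (simp add: Suc.IH fun_eq_iff DERIV_imp_deriv)
qed

lemma higher_deriv_exp_linear: "(deriv ^^ l) (\<lambda>t. exp (u * t)) = (\<lambda>t. u ^ l * exp (u * t))"
proof (induction l)
  case (Suc l)
  have "((\<lambda>t. u ^ l * exp (u * t)) has_field_derivative u ^ Suc l * exp (u * t)) (at t)" for t
    by (auto intro!: derivative_eq_intros)
  then show ?case
    by (simp add: Suc.IH fun_eq_iff DERIV_imp_deriv)
qed simp

lemma wronskian_fa:
  "wronskian (map (fa z \<mu>) [0..<n]) x
     = exp ((\<Sum>a<n. z a) * x)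
       * det (mat n n (\<lambda>(a, l). (x + \<mu> a) * z a ^ l + of_nat l * z a ^ (l - 1)))"
proof -
  have "wronskian (map (fa z \<mu>) [0..<n]) x
      = det (mat n n (\<lambda>(a, l). exp (z a * x) * ((x + \<mu> a) * z a ^ l + of_nat l * z a ^ (l - 1))))"
    unfolding wronskian_def
    by (auto simp: higher_deriv_fa intro!: arg_cong[where f = det] eq_matI)
  also have "\<dots> = (\<Prod>a<n. exp (z a * x))
      * det (mat n n (\<lambda>(a, l). (x + \<mu> a) * z a ^ l + of_nat l * z a ^ (l - 1)))"
    by (rule det_scale_rows)
  also have "(\<Prod>a<n. exp (z a * x)) = exp ((\<Sum>a<n. z a) * x)"
    by (simp add: exp_sum sum_distrib_right)
  finally show ?thesis .
qed

lemma wronskian_fa_exp: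
  "wronskian (map (fa z \<mu>) [0..<n] @ [\<lambda>t. exp (u * t)]) x
     = exp (u * x + (\<Sum>a<n. z a) * x)
       * det (mat n n (\<lambda>(a, l). (u - z a) * ((x + \<mu> a) * z a ^ l + of_nat l * z a ^ (l - 1)) - z a ^ l))"
proof -
  define e where "e a = (if a < n then exp (z a * x) else exp (u * x))" for a
  define m where "m a l = (if a < n then (x + \<mu> a) * z a ^ l + of_nat l * z a ^ (l - 1) else u ^ l)"
    for a l
  have "wronskian (map (fa z \<mu>) [0..<n] @ [\<lambda>t. exp (u * t)]) x
      = det (mat (Suc n) (Suc n) (\<lambda>(a, l). e a * m a l))"
    unfolding wronskian_def
    by (auto simp: e_def m_def nth_append higher_deriv_fa higher_deriv_exp_linear less_Suc_eq
        intro!: arg_cong[where f = det] eq_matI)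
  also have "\<dots> = (\<Prod>a<Suc n. e a) * det (mat (Suc n) (Suc n) (\<lambda>(a, l). m a l))"
    by (rule det_scale_rows)
  also have "(\<Prod>a<Suc n. e a) = exp (u * x + (\<Sum>a<n. z a) * x)"
    by (simp add: e_def exp_add exp_sum sum_distrib_right)
  also have "det (mat (Suc n) (Suc n) (\<lambda>(a, l). m a l))
      = det (mat n n (\<lambda>(a, k). u * m a k - m a (Suc k)))"
    by (subst det_last_row_powers[of _ _ u]) (auto simp: m_def intro!: arg_cong[where f = det] eq_matI)
  also have "mat n n (\<lambda>(a, k). u * m a k - m a (Suc k))
      = mat n n (\<lambda>(a, l). (u - z a) * ((x + \<mu> a) * z a ^ l + of_nat l * z a ^ (l - 1)) - z a ^ l)"
  proof -
    have "u * m a k - m a (Suc k)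
        = (u - z a) * ((x + \<mu> a) * z a ^ k + of_nat k * z a ^ (k - 1)) - z a ^ k"
      if "a < n" for a k
      using that by (cases k) (simp_all add: m_def algebra_simps)
    then show ?thesis by (intro cong_mat) auto
  qed
  finally show ?thesis .
qed

theorem lemma4p1:
  fixes n :: nat and z \<mu> :: "nat \<Rightarrow> complex" and u x :: complex
  assumes "inj_on z {..<n}"
  shows "exp (- (u * x) - (\<Sum>a<n. z a) * x)
           * wronskian (map (fa z \<mu>) [0..<n] @ [\<lambda>t. exp (u * t)]) x
         = Delta n z * det ((u \<cdot>\<^sub>m 1\<^sub>m n - Zmat n z) * (x \<cdot>\<^sub>m 1\<^sub>m n - Qmat n z \<mu>) - 1\<^sub>m n)
       \<and> exp (- ((\<Sum>a<n. z a) * x)) * wronskian (map (fa z \<mu>) [0..<n]) x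
         = Delta n z * det (x \<cdot>\<^sub>m 1\<^sub>m n - Qmat n z \<mu>)"
proof -
  let ?Y = "mat_diag n (\<lambda>a. x + \<mu> a)"
  have XQ: "x \<cdot>\<^sub>m 1\<^sub>m n - Qmat n z \<mu> = ?Y + cauchy_mat n z"
    by (rule eq_matI) (auto simp: Qmat_def hh_def cauchy_mat_def mat_diag_def minus_divide_right)
  have UZ: "u \<cdot>\<^sub>m 1\<^sub>m n - Zmat n z = mat_diag n (\<lambda>a. u - z a)"
    by (rule eq_matI) (auto simp: Zmat_def mat_diag_def)
  have UZQ: "(u \<cdot>\<^sub>m 1\<^sub>m n - Zmat n z) * (?Y + cauchy_mat n z) - 1\<^sub>m n
      = mat_diag n (\<lambda>a. u - z a) * (?Y + cauchy_mat n z) + mat_diag n (\<lambda>_. -1)"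
    unfolding UZ by (rule eq_matI) (auto simp: mat_diag_def)
  have YC: "1\<^sub>m n * (?Y + cauchy_mat n z) + mat_diag n (\<lambda>_. 0) = ?Y + cauchy_mat n z"
    by (rule eq_matI) (auto simp: mat_diag_def cauchy_mat_def)
  show ?thesis
    unfolding XQ
    using det_vandermonde_derivative_rows[OF assms, of "\<lambda>a. u - z a" "\<lambda>a. x + \<mu> a" "\<lambda>_. -1"]
      det_vandermonde_derivative_rows[OF assms, of "\<lambda>_. 1" "\<lambda>a. x + \<mu> a" "\<lambda>_. 0"]
    by (simp add: wronskian_fa wronskian_fa_exp UZQ YC mult.assoc[symmetric] flip: exp_add)
qed

end
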